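(* Let $\beta\in(0,\tfrac12)$ and $\lambda_1(\beta)=\sup\mathcal{A}_\beta$. Then $\lambda_1(\beta)$ is a principal eigenvalue of $\Delta_\beta$. Moreover, there is an eigenfunction $u:\mathbb{T}_m\to\mathbb{R}$ associated with $\lambda_1(\beta)$ such that $u(\emptyset)=1$, $u>0$ on $\mathbb{T}_m$, $\Delta_\beta u+\lambda_1(\beta)u=0$ on $\mathbb{T}_m$, $\lim_{x\to y}u(x)=0$ for all $y\in\partial\mathbb{T}_m$, and $u$ is constant on each level and decreasing with respect to the level, i.e. $u(x)=f(|x|)$ for a decreasing $f:\mathbb{N}_0\to\mathbb{R}$.
   Context: Tree: for an integer $m\ge2$, the regular $m$-branching tree $\mathbb{T}_m$ has as vertices the root $\emptyset$ and all finite sequences $(\emptyset,a_1,\dots,a_k)$, $k\in\mathbb{N}$, $a_i\in\{0,\dots,m-1\}$. The level of $x=(\emptyset,a_1,\dots,a_k)$ is $|x|=k$ ($|\emptyset|=0$). The successors of $x$ are $(x,i)$, $i\in\{0,\dots,m-1\}$; for $x\ne\emptyset$, $\hat x$ denotes its unique immediate predecessor. A branch is an infinite sequence $(x_n)_{n\ge0}$ with $x_0=\emptyset$ and $x_{n+1}$ a successor of $x_n$; $\partial\mathbb{T}_m$ is the set of branches. For $y=(x_n)\in\partial\mathbb{T}_m$, $\lim_{x\to y}u(x)=L$ means $\lim_{n\to\infty}u(x_n)=L$. Operator: for $\beta\in[0,1)$ let $p_\beta=1$ if $\beta=0$ and $p_\beta=\beta/(1-\beta)$ if $\beta\in(0,1)$.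 For $u:\mathbb{T}_m\to\mathbb{R}$, $\Delta_\beta u(\emptyset)=\frac1m\sum_{i=0}^{m-1}u(\emptyset,i)-u(\emptyset)$ and, for $x\ne\emptyset$, $\Delta_\beta u(x)=\big(\beta u(\hat x)+\frac{1-\beta}{m}\sum_{i=0}^{m-1}u(x,i)-u(x)\big)p_\beta^{-|x|}$. Eigenvalues: $\lambda\in\mathbb{R}$ is an eigenvalue of $\Delta_\beta$ if there is a bounded $u:\mathbb{T}_m\to\mathbb{R}$, $u\not\equiv0$, with $-\Delta_\beta u=\lambda u$ on $\mathbb{T}_m$ and $\lim_{x\to y}u(x)=0$ for every $y\in\partial\mathbb{T}_m$ ($u$ is an eigenfunction). An eigenvalue $\lambda>0$ is principal if it has a non-negative eigenfunction. The set $\mathcal{A}_\beta$: $\mathcal{A}_\beta=\{\lambda>0:\exists v:\mathbb{T}_m\to\mathbb{R}\text{ and constants }0<c<C\text{ with } c<v<C \text{ on }\mathbb{T}_m \text{ and } \Delta_\beta v+\lambda v\le0 \text{ on }\mathbb{T}_m\}$, and $\lambda_1(\beta)=\sup\mathcal{A}_\beta$. *)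

theory Defs
  imports "HOL-Analysis.Analysis"
begin

text \<open>Vertices of the regular m-branching tree: finite lists over {0..m-1};
  the root is the empty list, successors of x are x @ [i], the predecessor
  of a non-root x is butlast x, and the level of x is length x.\<close>

definition tree :: "nat \<Rightarrow> nat list set" where
  "tree m = {x. \<forall>a\<in>set x. a < m}"

definition branches :: "nat \<Rightarrow> (nat \<Rightarrow> nat list) set" where
  "branches m = {b. b 0 = [] \<and> (\<forall>n. \<exists>i<m. b (Suc n) = b n @ [i])}"

definition p_beta :: "real \<Rightarrow> real" where
  "p_beta \<beta> = (if \<beta> = 0 then 1 else \<beta> / (1 - \<beta>))"

definition lap :: "nat \<Rightarrow> real \<Rightarrow> (nat list \<Rightarrow> real) \<Rightarrow> nat list \<Rightarrow> real" where
  "lap m \<beta> u x =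
    (if x = [] then (1 / real m) * (\<Sum>i<m. u [i]) - u []
     else (\<beta> * u (butlast x) + ((1 - \<beta>) / real m) * (\<Sum>i<m. u (x @ [i])) - u x)
          / (p_beta \<beta>) ^ length x)"

definition eigenfunction :: "nat \<Rightarrow> real \<Rightarrow> real \<Rightarrow> (nat list \<Rightarrow> real) \<Rightarrow> bool" where
  "eigenfunction m \<beta> lam u \<longleftrightarrow>
     (\<exists>B. \<forall>x\<in>tree m. \<bar>u x\<bar> \<le> B) \<and>
     (\<exists>x\<in>tree m. u x \<noteq> 0) \<and>
     (\<forall>x\<in>tree m. - lap m \<beta> u x = lam * u x) \<and>
     (\<forall>b\<in>branches m. (\<lambda>n. u (b n)) \<longlonglongrightarrow> 0)"

definition eigenvalue :: "nat \<Rightarrow> real \<Rightarrow> real \<Rightarrow> bool" where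
  "eigenvalue m \<beta> lam \<longleftrightarrow> (\<exists>u. eigenfunction m \<beta> lam u)"

definition principal_eigenvalue :: "nat \<Rightarrow> real \<Rightarrow> real \<Rightarrow> bool" where
  "principal_eigenvalue m \<beta> lam \<longleftrightarrow>
     lam > 0 \<and> (\<exists>u. eigenfunction m \<beta> lam u \<and> (\<forall>x\<in>tree m. u x \<ge> 0))"

definition A_set :: "nat \<Rightarrow> real \<Rightarrow> real set" where
  "A_set m \<beta> = {lam. lam > 0 \<and> (\<exists>v c C. 0 < c \<and> c < C \<and>
       (\<forall>x\<in>tree m. c < v x \<and> v x < C) \<and>
       (\<forall>x\<in>tree m. lap m \<beta> v x + lam * v x \<le> 0))}"

definition lambda1 :: "nat \<Rightarrow> real \<Rightarrow> real" where
  "lambda1 m \<beta> = Sup (A_set m \<beta>)"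

end

theory Submission
  imports Defs
begin

text \<open>The set A is the open interval (0, lambda1): it is closed downwards, and lowering a
  bounded positive supersolution frees room to increase the parameter. Averaging a supersolution
  over the levels of the tree yields a radial one, and a Sturm comparison along the levels shows
  that the radial solution of \<Delta>u + \<lambda>u = 0 with u(\<emptyset>) = 1 stays positive for every
  \<lambda> < lambda1; by continuity it is nonnegative for \<lambda> = lambda1. A discrete divergence identity
  makes it strictly decreasing, and its limit is 0, because a positive limit would make it a
  witness for lambda1 \<in> A.\<close>

lemma p_beta_pos: "0 \<le> \<beta> \<Longrightarrow> \<beta> < 1 \<Longrightarrow> 0 < p_beta \<beta>"
  by (simp add: p_beta_def)

lemma p_beta_less_one: "0 < \<beta> \<Longrightarrow> \<beta> < 1 / 2 \<Longrightarrow> p_beta \<beta> < 1"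
  by (simp add: p_beta_def field_simps)

lemma one_minus_mult_p_beta: "0 < \<beta> \<Longrightarrow> \<beta> < 1 \<Longrightarrow> (1 - \<beta>) * p_beta \<beta> = \<beta>"
  by (simp add: p_beta_def)

lemma lap_add_const: "m > 0 \<Longrightarrow> lap m \<beta> (\<lambda>x. v x + d) x = lap m \<beta> v x"
  by (simp add: lap_def sum.distrib field_simps)

definition radial_lap :: "real \<Rightarrow> (nat \<Rightarrow> real) \<Rightarrow> nat \<Rightarrow> real" where
  "radial_lap \<beta> g n =
    (if n = 0 then g 1 - g 0
     else (\<beta> * g (n - 1) + (1 - \<beta>) * g (Suc n) - g n) / p_beta \<beta> ^ n)"

lemma lap_radial: "m > 0 \<Longrightarrow> lap m \<beta> (\<lambda>x. g (length x)) x = radial_lap \<beta> g (length x)"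
  by (simp add: lap_def radial_lap_def)

lemma radial_lap_Suc_le_iff:
  assumes "0 < p_beta \<beta>"
  shows "radial_lap \<beta> g (Suc k) + l * g (Suc k) \<le> 0 \<longleftrightarrow>
    \<beta> * g k + (1 - \<beta>) * g (Suc (Suc k)) \<le> (1 - l * p_beta \<beta> ^ Suc k) * g (Suc k)"
  using assms
  by (simp add: radial_lap_def divide_le_eq algebra_simps add_divide_eq_iff del: power_Suc)

definition tree_level :: "nat \<Rightarrow> nat \<Rightarrow> nat list set" where
  "tree_level m k = {x \<in> tree m. length x = k}"

lemma branch_in_tree_level: "b \<in> branches m \<Longrightarrow> b n \<in> tree_level m n"
proof (induction n)
  case 0
  then show ?case by (simp add: branches_def tree_level_def tree_def)
next
  case (Suc n)
  then obtain i where "i < m" "b (Suc n) = b n @ [i]" by (auto simp: branches_def)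
  with Suc show ?case by (auto simp: tree_level_def tree_def)
qed

lemma finite_tree_level: "finite (tree_level m k)"
  by (rule finite_subset[OF _ finite_lists_length_eq[of "{..<m}" k]])
    (auto simp: tree_level_def tree_def)

lemma replicate_in_tree_level: "m > 0 \<Longrightarrow> replicate k 0 \<in> tree_level m k"
  by (simp add: tree_level_def tree_def)

lemma tree_level_0: "tree_level m 0 = {[]}"
  by (auto simp: tree_level_def tree_def)

lemma tree_level_Suc: "tree_level m (Suc k) = (\<lambda>(x, i). x @ [i]) ` (tree_level m k \<times> {..<m})"
proof
  show "tree_level m (Suc k) \<subseteq> (\<lambda>(x, i). x @ [i]) ` (tree_level m k \<times> {..<m})"
  proof
    fix y assume y: "y \<in> tree_level m (Suc k)"
    then have "y \<noteq> []"
      by (auto simp: tree_level_def)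
    with y have "y = butlast y @ [last y]" and "last y < m" and "butlast y \<in> tree_level m k"
      by (auto simp: tree_level_def tree_def dest: in_set_butlastD)
    then show "y \<in> (\<lambda>(x, i). x @ [i]) ` (tree_level m k \<times> {..<m})"
      by (intro image_eqI[of _ _ "(butlast y, last y)"]) auto
  qed
qed (auto simp: tree_level_def tree_def)

lemma sum_tree_level_Suc:
  "(\<Sum>y\<in>tree_level m (Suc k). g y) = (\<Sum>x\<in>tree_level m k. \<Sum>i<m. g (x @ [i]))"
proof -
  have "inj_on (\<lambda>(x, i). x @ [i]) (tree_level m k \<times> {..<m})"
    by (auto simp: inj_on_def)
  then show ?thesis
    unfolding tree_level_Suc
    by (subst sum.reindex) (simp_all add: sum.cartesian_product case_prod_beta)
qed

definition level_mean :: "nat \<Rightarrow> (nat list \<Rightarrow> real) \<Rightarrow> nat \<Rightarrow> real" where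
  "level_mean m v k = (\<Sum>x\<in>tree_level m k. v x) / real m ^ k"

lemma level_mean_pos: "m > 0 \<Longrightarrow> (\<And>x. x \<in> tree m \<Longrightarrow> 0 < v x) \<Longrightarrow> 0 < level_mean m v k"
  using replicate_in_tree_level[of m k] finite_tree_level[of m k]
  by (auto simp: level_mean_def tree_level_def intro!: divide_pos_pos sum_pos)

lemma level_mean_nonpos: "(\<And>x. x \<in> tree m \<Longrightarrow> v x \<le> 0) \<Longrightarrow> level_mean m v k \<le> 0"
  by (auto simp: level_mean_def tree_level_def intro!: divide_nonpos_nonneg sum_nonpos)

lemma level_mean_add_scaled:
  "level_mean m (\<lambda>x. v x + c * w x) k = level_mean m v k + c * level_mean m w k"
  by (simp add: level_mean_def sum.distrib sum_distrib_left add_divide_distrib)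

lemma radial_lap_level_mean:
  assumes "m > 0"
  shows "radial_lap \<beta> (level_mean m v) k = level_mean m (lap m \<beta> v) k"
proof (cases k)
  case 0
  then show ?thesis
    using sum_tree_level_Suc[where m=m and k=0 and g=v]
    by (simp add: radial_lap_def level_mean_def lap_def tree_level_0)
next
  case (Suc j)
  define S where "S n = (\<Sum>x\<in>tree_level m n. v x)" for n
  have parents: "(\<Sum>x\<in>tree_level m (Suc j). v (butlast x)) = m * S j"
    using sum_tree_level_Suc[where m=m and k=j and g="\<lambda>x. v (butlast x)"]
    by (simp add: S_def sum_distrib_left)
  have children: "(\<Sum>x\<in>tree_level m (Suc j). \<Sum>i<m. v (x @ [i])) = S (Suc (Suc j))"
    using sum_tree_level_Suc[where m=m and k="Suc j" and g=v] by (simp add: S_def)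
  have "(\<Sum>x\<in>tree_level m (Suc j). lap m \<beta> v x) =
      (\<Sum>x\<in>tree_level m (Suc j).
        (\<beta> * v (butlast x) + (1 - \<beta>) / m * (\<Sum>i<m. v (x @ [i])) - v x) / p_beta \<beta> ^ Suc j)"
    by (rule sum.cong) (auto simp: lap_def tree_level_def)
  also have "\<dots> = (\<beta> * (\<Sum>x\<in>tree_level m (Suc j). v (butlast x))
       + (1 - \<beta>) / m * (\<Sum>x\<in>tree_level m (Suc j). \<Sum>i<m. v (x @ [i]))
       - S (Suc j)) / p_beta \<beta> ^ Suc j"
    by (simp add: S_def sum_divide_distrib[symmetric] sum.distrib sum_subtractf sum_distrib_left)
  also have "\<dots> = (\<beta> * (m * S j) + (1 - \<beta>) / m * S (Suc (Suc j)) - S (Suc j)) / p_beta \<beta> ^ Suc j"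
    by (simp only: parents children)
  finally have "level_mean m (lap m \<beta> v) k =
      (\<beta> * (m * S j) + (1 - \<beta>) / m * S (Suc (Suc j)) - S (Suc j)) / m ^ Suc j / p_beta \<beta> ^ Suc j"
    by (simp add: level_mean_def Suc)
  also have "(\<beta> * (m * S j) + (1 - \<beta>) / m * S (Suc (Suc j)) - S (Suc j)) / m ^ Suc j =
      \<beta> * level_mean m v j + (1 - \<beta>) * level_mean m v (Suc (Suc j)) - level_mean m v (Suc j)"
    using assms by (simp add: level_mean_def S_def field_simps)
  also have "\<dots> / p_beta \<beta> ^ Suc j = radial_lap \<beta> (level_mean m v) k"
    by (simp add: Suc radial_lap_def)
  finally show ?thesis ..
qed

lemma A_set_radial_supersolution:
  assumes "m > 0" and "l \<in> A_set m \<beta>"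
  obtains g where "\<And>n. 0 < g n" and "\<And>n. radial_lap \<beta> g n + l * g n \<le> 0"
proof -
  from assms(2) obtain v c C where "0 < c" and v_bounds: "\<forall>x\<in>tree m. c < v x \<and> v x < C"
    and v_super: "\<forall>x\<in>tree m. lap m \<beta> v x + l * v x \<le> 0"
    by (auto simp: A_set_def)
  show thesis
  proof (rule that)
    show "0 < level_mean m v n" for n
      using assms(1) \<open>0 < c\<close> v_bounds by (force intro: level_mean_pos)
    show "radial_lap \<beta> (level_mean m v) n + l * level_mean m v n \<le> 0" for n
      using level_mean_nonpos[of m "\<lambda>x. lap m \<beta> v x + l * v x" n] v_super
      by (simp add: radial_lap_level_mean[OF assms(1)] level_mean_add_scaled)
  qed
qed

lemma radial_in_A_set:
  assumes "m > 0" and "0 < l" and "0 < c" and bounds: "\<And>n. c < g n \<and> g n < C"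
    and super: "\<And>n. radial_lap \<beta> g n + l * g n \<le> 0"
  shows "l \<in> A_set m \<beta>"
  unfolding A_set_def
proof (intro CollectI conjI exI)
  show "c < C" using bounds[of 0] by simp
  show "\<forall>x\<in>tree m. c < g (length x) \<and> g (length x) < C" using bounds by simp
  show "\<forall>x\<in>tree m. lap m \<beta> (\<lambda>x. g (length x)) x + l * g (length x) \<le> 0"
    using super by (simp add: lap_radial[OF assms(1)])
qed (fact assms)+

lemma A_set_less_one:
  assumes "m > 0" and "l \<in> A_set m \<beta>"
  shows "l < 1"
proof -
  obtain g where pos: "\<And>n. 0 < g n" and super: "\<And>n. radial_lap \<beta> g n + l * g n \<le> 0"
    using A_set_radial_supersolution[OF assms] by blast
  have "0 < g 1" by (fact pos)
  also have "g 1 \<le> (1 - l) * g 0"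
    using super[of 0] by (simp add: radial_lap_def algebra_simps)
  finally show ?thesis
    using pos[of 0] by (simp add: zero_less_mult_iff)
qed

lemma A_set_downward_closed:
  assumes "l \<in> A_set m \<beta>" and "0 < l'" and "l' \<le> l"
  shows "l' \<in> A_set m \<beta>"
proof -
  obtain v c C where "0 < c" "c < C" and v_bounds: "\<forall>x\<in>tree m. c < v x \<and> v x < C"
    and v_super: "\<forall>x\<in>tree m. lap m \<beta> v x + l * v x \<le> 0"
    using assms(1) by (auto simp: A_set_def)
  have "\<forall>x\<in>tree m. lap m \<beta> v x + l' * v x \<le> 0"
  proof
    fix x assume "x \<in> tree m"
    then have "l' * v x \<le> l * v x" and "lap m \<beta> v x + l * v x \<le> 0"
      using assms(3) \<open>0 < c\<close> v_bounds v_super by (force intro: mult_right_mono)+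
    then show "lap m \<beta> v x + l' * v x \<le> 0" by linarith
  qed
  then show ?thesis
    using assms(2) \<open>0 < c\<close> \<open>c < C\<close> v_bounds unfolding A_set_def by blast
qed

lemma A_set_open:
  assumes "m > 0" and "l \<in> A_set m \<beta>"
  shows "\<exists>l' > l. l' \<in> A_set m \<beta>"
proof -
  obtain v c C where "0 < l" "0 < c" "c < C" and v_bounds: "\<forall>x\<in>tree m. c < v x \<and> v x < C"
    and v_super: "\<forall>x\<in>tree m. lap m \<beta> v x + l * v x \<le> 0"
    using assms(2) by (auto simp: A_set_def)
  define w where "w = (\<lambda>x. v x - c / 2)"
  define e where "e = l * c / (2 * C)"
  have "0 < e" using \<open>0 < l\<close> \<open>0 < c\<close> \<open>c < C\<close> by (simp add: e_def)
  have "\<forall>x\<in>tree m. lap m \<beta> w x + (l + e) * w x \<le> 0"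
  proof
    fix x assume x: "x \<in> tree m"
    have "lap m \<beta> w x = lap m \<beta> v x"
      using lap_add_const[OF assms(1), of \<beta> v "- c / 2"] by (simp add: w_def)
    moreover have "e * w x \<le> e * C"
      using x v_bounds \<open>0 < e\<close> \<open>0 < c\<close> by (force simp: w_def)
    moreover have "e * C = l * c / 2"
      using \<open>c < C\<close> \<open>0 < c\<close> by (simp add: e_def)
    moreover have "lap m \<beta> v x + (l + e) * w x = (lap m \<beta> v x + l * v x) - l * c / 2 + e * w x"
      by (simp add: w_def algebra_simps)
    ultimately show "lap m \<beta> w x + (l + e) * w x \<le> 0"
      using v_super x by fastforce
  qed
  moreover have "\<forall>x\<in>tree m. c / 2 < w x \<and> w x < C"
    using v_bounds \<open>0 < c\<close> by (force simp: w_def)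
  ultimately have "l + e \<in> A_set m \<beta>"
    using \<open>0 < l\<close> \<open>0 < e\<close> \<open>0 < c\<close> \<open>c < C\<close> unfolding A_set_def
    by (intro CollectI conjI exI[of _ w] exI[of _ "c / 2"] exI[of _ C]) auto
  with \<open>0 < e\<close> show ?thesis by (intro exI[of _ "l + e"]) auto
qed

lemma A_set_eq_interval:
  assumes "m > 0" and "A_set m \<beta> \<noteq> {}"
  shows "A_set m \<beta> = {0<..<lambda1 m \<beta>}"
proof -
  have bdd: "bdd_above (A_set m \<beta>)"
    using A_set_less_one[OF assms(1)] by (intro bdd_aboveI[of _ 1]) (simp add: less_imp_le)
  show ?thesis
  proof (intro set_eqI iffI)
    fix l assume l: "l \<in> A_set m \<beta>"
    obtain l' where "l < l'" "l' \<in> A_set m \<beta>" using A_set_open[OF assms(1) l] by blast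
    then have "l < lambda1 m \<beta>"
      using bdd cSup_upper unfolding lambda1_def by fastforce
    with l show "l \<in> {0<..<lambda1 m \<beta>}" by (simp add: A_set_def)
  next
    fix l assume "l \<in> {0<..<lambda1 m \<beta>}"
    moreover obtain l' where "l' \<in> A_set m \<beta>" "l < l'"
      using calculation less_cSup_iff[OF assms(2) bdd] by (auto simp: lambda1_def)
    ultimately show "l \<in> A_set m \<beta>"
      using A_set_downward_closed by fastforce
  qed
qed

text \<open>For p < r < 1 the function r^|x| has Laplacian below a negative constant, because
  \<beta> + (1 - \<beta>) r^2 - r = - (1 - \<beta>) (r - p) (1 - r).\<close>

lemma A_set_nonempty:
  assumes "m > 0" and "0 < \<beta>" and "\<beta> < 1 / 2"
  shows "A_set m \<beta> \<noteq> {}"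
proof -
  define p where "p = p_beta \<beta>"
  define r where "r = (1 + p) / 2"
  have "0 < p" "p < 1"
    using assms p_beta_pos p_beta_less_one by (auto simp: p_def)
  then have "0 < r" "p < r" "r < 1" by (auto simp: r_def)
  define K where "K = (1 - \<beta>) * (r - p) * (1 - r)"
  define \<kappa> where "\<kappa> = min (1 - r) K"
  have "0 < \<kappa>"
    using \<open>p < r\<close> \<open>r < 1\<close> assms by (simp add: \<kappa>_def K_def)
  have lap_le: "radial_lap \<beta> (\<lambda>n. r ^ n + 1) n \<le> - \<kappa>" for n
  proof (cases n)
    case 0
    then show ?thesis by (simp add: radial_lap_def \<kappa>_def)
  next
    case (Suc j)
    have "\<beta> + (1 - \<beta>) * r * r - r + K = (\<beta> - (1 - \<beta>) * p) * (1 - r)"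
      by (simp add: K_def algebra_simps)
    then have "\<beta> + (1 - \<beta>) * r * r - r = - K"
      using one_minus_mult_p_beta assms by (simp add: p_def)
    moreover have "\<beta> * (r ^ j + 1) + (1 - \<beta>) * (r ^ Suc (Suc j) + 1) - (r ^ Suc j + 1)
        = (\<beta> + (1 - \<beta>) * r * r - r) * r ^ j"
      by (simp add: algebra_simps)
    ultimately have numerator:
      "\<beta> * (r ^ j + 1) + (1 - \<beta>) * (r ^ Suc (Suc j) + 1) - (r ^ Suc j + 1) = - K * r ^ j"
      by simp
    have "p ^ Suc j \<le> p ^ j"
      using \<open>0 < p\<close> \<open>p < 1\<close> by (simp add: power_decreasing)
    also have "\<dots> \<le> r ^ j"
      using \<open>0 < p\<close> \<open>p < r\<close> by (simp add: power_mono)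
    finally have "- K * r ^ j / p ^ Suc j \<le> - K"
      using \<open>0 < p\<close> \<open>0 < \<kappa>\<close> by (simp add: \<kappa>_def field_simps)
    then show ?thesis
      using numerator by (simp add: Suc radial_lap_def p_def \<kappa>_def del: power_Suc)
  qed
  have "\<kappa> / 2 \<in> A_set m \<beta>"
  proof (rule radial_in_A_set[where c = 1 and C = 3])
    show "1 < r ^ n + 1 \<and> r ^ n + 1 < 3" for n
      using \<open>0 < r\<close> \<open>r < 1\<close> power_le_one[of r n] by simp
    show "radial_lap \<beta> (\<lambda>n. r ^ n + 1) n + \<kappa> / 2 * (r ^ n + 1) \<le> 0" for n
    proof -
      have "\<kappa> / 2 * (r ^ n + 1) \<le> \<kappa> / 2 * 2"
        using \<open>0 < r\<close> \<open>r < 1\<close> \<open>0 < \<kappa>\<close> power_le_one[of r n] by (intro mult_left_mono) auto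
      with lap_le[of n] show ?thesis by simp
    qed
  qed (use assms \<open>0 < \<kappa>\<close> in auto)
  then show ?thesis by blast
qed

fun radial_sol :: "real \<Rightarrow> real \<Rightarrow> nat \<Rightarrow> real" where
  "radial_sol \<beta> l 0 = 1"
| "radial_sol \<beta> l (Suc 0) = 1 - l"
| "radial_sol \<beta> l (Suc (Suc n)) =
     ((1 - l * p_beta \<beta> ^ Suc n) * radial_sol \<beta> l (Suc n) - \<beta> * radial_sol \<beta> l n) / (1 - \<beta>)"

lemma radial_sol_recurrence:
  "\<beta> \<noteq> 1 \<Longrightarrow> (1 - \<beta>) * radial_sol \<beta> l (Suc (Suc n)) =
    (1 - l * p_beta \<beta> ^ Suc n) * radial_sol \<beta> l (Suc n) - \<beta> * radial_sol \<beta> l n"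
  by simp

lemma radial_lap_radial_sol:
  assumes "0 \<le> \<beta>" and "\<beta> < 1"
  shows "radial_lap \<beta> (radial_sol \<beta> l) n + l * radial_sol \<beta> l n = 0"
proof (cases n)
  case 0
  then show ?thesis by (simp add: radial_lap_def)
next
  case (Suc k)
  have "\<beta> * radial_sol \<beta> l k + (1 - \<beta>) * radial_sol \<beta> l (Suc (Suc k)) - radial_sol \<beta> l (Suc k)
      = - l * radial_sol \<beta> l (Suc k) * p_beta \<beta> ^ Suc k"
    using assms by (simp only: radial_sol_recurrence) (simp add: algebra_simps)
  then show ?thesis
    using p_beta_pos[OF assms] by (simp add: Suc radial_lap_def del: radial_sol.simps power_Suc)
qed

lemma isCont_radial_sol:
  assumes "\<beta> \<noteq> 1"
  shows "isCont (\<lambda>l. radial_sol \<beta> l n) l0"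
proof (induction n rule: less_induct)
  case (less n)
  consider "n = 0" | "n = 1" | k where "n = Suc (Suc k)"
    by (metis One_nat_def not0_implies_Suc)
  then show ?case
  proof cases
    case 3
    with less assms show ?thesis by (auto intro!: continuous_intros)
  qed auto
qed

text \<open>Sturm comparison: the Wronskian g n f (n + 1) - f n g (n + 1) of a positive supersolution g
  and the radial solution f stays nonnegative.\<close>

lemma radial_sol_pos_of_supersolution:
  assumes "0 \<le> \<beta>" and "\<beta> < 1" and g_pos: "\<And>n. 0 < g n"
    and g_super: "\<And>n. radial_lap \<beta> g n + l * g n \<le> 0"
  shows "0 < radial_sol \<beta> l n"
proof -
  define f where "f = radial_sol \<beta> l"
  have "0 < f n \<and> f n * g (Suc n) \<le> g n * f (Suc n)"
  proof (induction n)
    case 0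
    show ?case using g_super[of 0] by (simp add: f_def radial_lap_def algebra_simps)
  next
    case (Suc n)
    define q where "q = l * p_beta \<beta> ^ Suc n"
    have "0 < f n * g (Suc n)" using Suc g_pos by simp
    also have "\<dots> \<le> g n * f (Suc n)" using Suc by simp
    finally have f_pos: "0 < f (Suc n)"
      using g_pos[of n] by (simp add: zero_less_mult_iff)
    have f_rec: "(1 - \<beta>) * f (Suc (Suc n)) = (1 - q) * f (Suc n) - \<beta> * f n"
      using assms by (simp add: f_def q_def radial_sol_recurrence del: radial_sol.simps)
    have "(1 - \<beta>) * g (Suc (Suc n)) \<le> (1 - q) * g (Suc n) - \<beta> * g n"
      using g_super[of "Suc n"] radial_lap_Suc_le_iff[OF p_beta_pos[OF assms(1,2)]]
      by (simp add: q_def algebra_simps)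
    then have g_rec: "f (Suc n) * ((1 - \<beta>) * g (Suc (Suc n)))
        \<le> f (Suc n) * ((1 - q) * g (Suc n) - \<beta> * g n)"
      using f_pos by (simp add: mult_left_mono)
    have "\<beta> * (g n * f (Suc n) - f n * g (Suc n))
        = g (Suc n) * ((1 - q) * f (Suc n) - \<beta> * f n) - f (Suc n) * ((1 - q) * g (Suc n) - \<beta> * g n)"
      by (simp add: algebra_simps)
    also have "\<dots> \<le> g (Suc n) * ((1 - q) * f (Suc n) - \<beta> * f n)
        - f (Suc n) * ((1 - \<beta>) * g (Suc (Suc n)))"
      using g_rec by linarith
    also have "\<dots> = g (Suc n) * ((1 - \<beta>) * f (Suc (Suc n)))
        - f (Suc n) * ((1 - \<beta>) * g (Suc (Suc n)))"
      by (simp only: f_rec)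
    also have "\<dots> = (1 - \<beta>) * (g (Suc n) * f (Suc (Suc n)) - f (Suc n) * g (Suc (Suc n)))"
      by (simp add: algebra_simps)
    finally have "\<beta> * (g n * f (Suc n) - f n * g (Suc n))
        \<le> (1 - \<beta>) * (g (Suc n) * f (Suc (Suc n)) - f (Suc n) * g (Suc (Suc n)))" .
    moreover have "0 \<le> \<beta> * (g n * f (Suc n) - f n * g (Suc n))"
      using Suc assms(1) by simp
    ultimately have "0 \<le> (1 - \<beta>) * (g (Suc n) * f (Suc (Suc n)) - f (Suc n) * g (Suc (Suc n)))"
      by linarith
    with f_pos assms(2) show ?case by (simp add: zero_le_mult_iff)
  qed
  then show ?thesis by (simp add: f_def)
qed

lemma radial_sol_pos_of_A_set:
  assumes "m > 0" and "0 \<le> \<beta>" and "\<beta> < 1" and "l \<in> A_set m \<beta>"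
  shows "0 < radial_sol \<beta> l n"
proof -
  obtain g where "\<And>n. 0 < g n" and "\<And>n. radial_lap \<beta> g n + l * g n \<le> 0"
    using A_set_radial_supersolution[OF assms(1,4)] by blast
  then show ?thesis by (rule radial_sol_pos_of_supersolution[OF assms(2,3)])
qed

lemma radial_sol_nonneg_of_pos_below:
  assumes "\<beta> \<noteq> 1" and "0 < L" and pos: "\<And>l. 0 < l \<Longrightarrow> l < L \<Longrightarrow> 0 < radial_sol \<beta> l n"
  shows "0 \<le> radial_sol \<beta> L n"
proof (rule tendsto_lowerbound)
  show "((\<lambda>l. radial_sol \<beta> l n) \<longlongrightarrow> radial_sol \<beta> L n) (at_left L)"
    using isCont_radial_sol[OF assms(1)] by (simp add: isCont_def filterlim_at_split)
  have "eventually (\<lambda>l. 0 < l \<and> l < L) (at_left L)"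
    using eventually_at_left_real[OF assms(2)] by (simp add: greaterThanLessThan_iff)
  then show "eventually (\<lambda>l. 0 \<le> radial_sol \<beta> l n) (at_left L)"
    by eventually_elim (use pos in \<open>auto intro: less_imp_le\<close>)
qed simp

text \<open>Discrete divergence theorem: as \<beta> / p^(n+1) = (1 - \<beta>) / p^n, the radial Laplacian at level
  n + 1 is the difference of the consecutive fluxes (1 - \<beta>) (g (k + 1) - g k) / p^k, k = n + 1, n.\<close>

lemma radial_flux:
  assumes "0 < \<beta>" and "\<beta> < 1"
  shows "(1 - \<beta>) * (g (Suc n) - g n) =
    p_beta \<beta> ^ n * ((1 - \<beta>) * radial_lap \<beta> g 0 + (\<Sum>k<n. radial_lap \<beta> g (Suc k)))"
proof (induction n)
  case 0
  then show ?case by (simp add: radial_lap_def)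
next
  case (Suc n)
  define p where "p = p_beta \<beta>"
  define F where "F = (1 - \<beta>) * radial_lap \<beta> g 0 + (\<Sum>k<n. radial_lap \<beta> g (Suc k))"
  have p_mult: "p * (1 - \<beta>) = \<beta>"
    using one_minus_mult_p_beta[OF assms] by (simp add: p_def mult.commute)
  have "p ^ Suc n * (F + radial_lap \<beta> g (Suc n))
      = p * (p ^ n * F) + p ^ Suc n * radial_lap \<beta> g (Suc n)"
    by (simp add: algebra_simps)
  also have "\<dots> = p * ((1 - \<beta>) * (g (Suc n) - g n))
      + (\<beta> * g n + (1 - \<beta>) * g (Suc (Suc n)) - g (Suc n))"
    using Suc.IH p_beta_pos[of \<beta>] assms by (simp add: F_def p_def radial_lap_def del: power_Suc)
  also have "\<dots> = (1 - \<beta>) * (g (Suc (Suc n)) - g (Suc n))"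
    by (simp only: mult.assoc[symmetric] p_mult) (simp add: algebra_simps)
  finally show ?case
    by (simp add: F_def p_def add.assoc)
qed

lemma radial_supersolution_strict_decreasing:
  assumes "0 < \<beta>" and "\<beta> < 1" and "0 < l" and "0 < g 0" and g_nonneg: "\<And>n. 0 \<le> g n"
    and g_super: "\<And>n. radial_lap \<beta> g n + l * g n \<le> 0"
  shows "g (Suc n) < g n"
proof -
  have "radial_lap \<beta> g 0 < 0"
    using g_super[of 0] \<open>0 < l\<close> \<open>0 < g 0\<close> by (smt (verit) mult_pos_pos)
  moreover have "radial_lap \<beta> g k \<le> 0" for k
    using g_super[of k] \<open>0 < l\<close> g_nonneg[of k] by (smt (verit) mult_nonneg_nonneg)
  ultimately have "(1 - \<beta>) * radial_lap \<beta> g 0 < 0" and "(\<Sum>k<n. radial_lap \<beta> g (Suc k)) \<le> 0"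
    using assms(2) by (auto intro: mult_pos_neg sum_nonpos)
  then have "(1 - \<beta>) * (g (Suc n) - g n) < 0"
    using radial_flux[OF assms(1,2), of g n] p_beta_pos[of \<beta>] assms(1,2)
    by (simp add: mult_pos_neg)
  with assms(2) show ?thesis by (simp add: mult_less_0_iff)
qed

lemma decreasing_radial_supersolution_tendsto_0:
  assumes "m > 0" and "0 < l" and "l \<notin> A_set m \<beta>" and "decseq g" and g_pos: "\<And>n. 0 < g n"
    and g_super: "\<And>n. radial_lap \<beta> g n + l * g n \<le> 0"
  shows "g \<longlonglongrightarrow> 0"
proof -
  obtain c where lim: "g \<longlonglongrightarrow> c" and c_le: "\<forall>n. c \<le> g n"
    using decseq_convergent[OF assms(4), of 0] g_pos less_imp_le by blast
  have "0 \<le> c"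
    using lim g_pos by (intro LIMSEQ_le_const) (auto intro: less_imp_le)
  moreover have "\<not> 0 < c"
  proof
    assume "0 < c"
    have "c / 2 < g n \<and> g n < g 0 + 1" for n
    proof -
      have "c \<le> g n" and "g n \<le> g 0"
        using c_le antimonoD[OF assms(4), of 0 n] by auto
      with \<open>0 < c\<close> show ?thesis by (intro conjI) linarith+
    qed
    then have "l \<in> A_set m \<beta>"
      using radial_in_A_set[OF assms(1,2)] \<open>0 < c\<close> g_super by (metis half_gt_zero)
    with assms(3) show False ..
  qed
  ultimately show ?thesis
    using lim by simp
qed

lemma eigenfunction_radial:
  assumes "m > 0" and "g 0 \<noteq> 0" and eq: "\<And>n. radial_lap \<beta> g n + l * g n = 0"
    and lim: "g \<longlonglongrightarrow> 0"
  shows "eigenfunction m \<beta> l (\<lambda>x. g (length x))"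
  unfolding eigenfunction_def
proof (intro conjI)
  obtain B where "\<forall>n. norm (g n) \<le> B"
    using BseqE[OF convergent_imp_Bseq[OF convergentI[OF lim]]] by blast
  then show "\<exists>B. \<forall>x\<in>tree m. \<bar>g (length x)\<bar> \<le> B" by auto
  show "\<exists>x\<in>tree m. g (length x) \<noteq> 0"
    using assms(2) by (intro bexI[of _ "[]"]) (auto simp: tree_def)
  show "\<forall>x\<in>tree m. - lap m \<beta> (\<lambda>x. g (length x)) x = l * g (length x)"
    using eq by (simp add: lap_radial[OF assms(1)] add_eq_0_iff)
  show "\<forall>b\<in>branches m. (\<lambda>n. g (length (b n))) \<longlonglongrightarrow> 0"
    using lim branch_in_tree_level by (simp add: tree_level_def)
qed

theorem theorem1p2:
  fixes m :: nat and \<beta> :: real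
  assumes "m \<ge> 2" and "0 < \<beta>" and "\<beta> < 1 / 2"
  shows "principal_eigenvalue m \<beta> (lambda1 m \<beta>) \<and>
    (\<exists>u. eigenfunction m \<beta> (lambda1 m \<beta>) u \<and> u [] = 1 \<and>
       (\<forall>x\<in>tree m. u x > 0) \<and>
       (\<forall>x\<in>tree m. lap m \<beta> u x + lambda1 m \<beta> * u x = 0) \<and>
       (\<forall>b\<in>branches m. (\<lambda>n. u (b n)) \<longlonglongrightarrow> 0) \<and>
       (\<exists>f :: nat \<Rightarrow> real. antimono f \<and> (\<forall>x\<in>tree m. u x = f (length x))))"
proof -
  have "m > 0" and \<beta>: "0 \<le> \<beta>" "\<beta> < 1" using assms by auto
  define L where "L = lambda1 m \<beta>"
  define f where "f = radial_sol \<beta> L"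
  have A_ne: "A_set m \<beta> \<noteq> {}" by (rule A_set_nonempty[OF \<open>m > 0\<close> assms(2,3)])
  have A_eq: "A_set m \<beta> = {0<..<L}" using A_set_eq_interval[OF \<open>m > 0\<close> A_ne] by (simp add: L_def)
  with A_ne have "0 < L" by auto
  have f_eq: "radial_lap \<beta> f n + L * f n = 0" for n
    unfolding f_def by (rule radial_lap_radial_sol[OF \<beta>])
  have f_nonneg: "0 \<le> f n" for n
    unfolding f_def using \<beta> \<open>0 < L\<close> A_eq radial_sol_pos_of_A_set[OF \<open>m > 0\<close> \<beta>]
    by (intro radial_sol_nonneg_of_pos_below) auto
  have f_dec: "f (Suc n) < f n" for n
    using assms(2) \<beta> \<open>0 < L\<close> f_nonneg f_eq
    by (intro radial_supersolution_strict_decreasing[where l = L]) (auto simp: f_def)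
  then have "decseq f" and f_pos: "0 < f n" for n
    using f_nonneg[of "Suc n"] by (auto simp: decseq_Suc_iff less_imp_le intro: le_less_trans)
  have "f \<longlonglongrightarrow> 0"
    using A_eq f_eq f_pos \<open>decseq f\<close>
    by (intro decreasing_radial_supersolution_tendsto_0[OF \<open>m > 0\<close> \<open>0 < L\<close>]) auto
  then have "eigenfunction m \<beta> L (\<lambda>x. f (length x))"
    using f_eq by (intro eigenfunction_radial[OF \<open>m > 0\<close>]) (auto simp: f_def)
  with f_pos f_eq \<open>0 < L\<close> \<open>decseq f\<close> \<open>f \<longlonglongrightarrow> 0\<close> show ?thesis
    unfolding principal_eigenvalue_def L_def[symmetric] eigenfunction_def
    by (intro conjI exI[of _ "\<lambda>x. f (length x)"] exI[of _ f])
      (auto simp: f_def lap_radial[OF \<open>m > 0\<close>] less_imp_le)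
qed

end
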